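(* For each $p>1$ let $u_p\in K_p$ be a nonnegative function with $Q(u_p)=J_p$. Then $$\gamma_p:=\Big(|A|^{-1}\int_A u_p^{p+1}\Big)^{\frac1{p+1}}\to 1\quad\text{as }p\to\infty,$$ where $A=B_{R_2}\setminus B_{R_1}$.
   Context: Let $n\ge2$, $B_1\subset\mathbb{R}^n$ the open unit ball, $B_R$ the ball of radius $R$ centered at the origin, and $V(|x|)\ge0$, $V\not\equiv0$, a smooth radial function on $B_1$. Let $G$ be the Neumann Green function: for $s\in(0,1)$, $-\partial_r^2G(r,s)-\frac{n-1}{r}\partial_rG(r,s)+V(r)G(r,s)=\delta_s$ in distributions on $(0,1)$ (Dirac mass w.r.t. $dr$), $\partial_rG(0,s)=\partial_rG(1,s)=0$. Let $F(r)=|\partial B_1|\,r^{n-1}/G(r,r)$. Let $\bar r\in(0,1)$ be a local minimum point of $F$, and fix $0<R_1<\bar r<R_2<1$ such that $\bar r$ is a global minimum point of $F$ on $[R_1,R_2]$; fix $c$ with $\max\{G(R_1,\bar r)/G(\bar r,\bar r),\,G(R_2,\bar r)/G(\bar r,\bar r)\}<c<1$. Let $H^1_r(B_1)=\{u\in H^1(B_1): u \text{ radial}\}$, $Q(u)=\int_{B_1}(|\nabla u|^2+V(|x|)u^2)$, and for $p>1$ $$K_p=\Big\{u\in H^1_r(B_1):\ \Big(|B_1|^{-1}\int_{B_1}|u|^{p+1}\Big)^{\frac1{p+1}}=1,\ |u|\le c \text{ in } B_{R_1}\cup(B_1\setminus B_{R_2})\Big\},\qquad J_p=\inf\{Q(u):u\in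 K_p\}.$$ *)

theory Defs
  imports "HOL-Analysis.Analysis"
begin

fun dder :: "'a::euclidean_space list \<Rightarrow> ('a \<Rightarrow> real) \<Rightarrow> 'a \<Rightarrow> real" where
  "dder [] f = f"
| "dder (v # vs) f = (\<lambda>x. frechet_derivative (dder vs f) (at x) v)"

definition smooth_on :: "'a::euclidean_space set \<Rightarrow> ('a \<Rightarrow> real) \<Rightarrow> bool" where
  "smooth_on U f \<longleftrightarrow> (\<forall>vs. \<forall>x\<in>U. dder vs f differentiable (at x))"

definition test_fun :: "'a::euclidean_space set \<Rightarrow> ('a \<Rightarrow> real) \<Rightarrow> bool" where
  "test_fun U \<phi> \<longleftrightarrow> smooth_on U \<phi> \<and> compact (closure {x. \<phi> x \<noteq> 0})
                      \<and> closure {x. \<phi> x \<noteq> 0} \<subseteq> U"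

definition is_weak_grad ::
  "(real^'n) set \<Rightarrow> (real^'n \<Rightarrow> real) \<Rightarrow> (real^'n \<Rightarrow> real^'n) \<Rightarrow> bool" where
  "is_weak_grad U u g \<longleftrightarrow>
     (\<forall>\<phi>. test_fun U \<phi> \<longrightarrow> (\<forall>i.
        set_lebesgue_integral lebesgue U (\<lambda>x. u x * frechet_derivative \<phi> (at x) (axis i 1))
        = - set_lebesgue_integral lebesgue U (\<lambda>x. g x $ i * \<phi> x)))"

definition H1 :: "(real^'n) set \<Rightarrow> (real^'n \<Rightarrow> real) \<Rightarrow> bool" where
  "H1 U u \<longleftrightarrow> set_borel_measurable lebesgue U u
     \<and> set_integrable lebesgue U (\<lambda>x. (u x)\<^sup>2)
     \<and> (\<exists>g. set_borel_measurable lebesgue U g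
            \<and> set_integrable lebesgue U (\<lambda>x. (norm (g x))\<^sup>2)
            \<and> is_weak_grad U u g)"

definition wgrad :: "(real^'n) set \<Rightarrow> (real^'n \<Rightarrow> real) \<Rightarrow> real^'n \<Rightarrow> real^'n" where
  "wgrad U u = (SOME g. set_borel_measurable lebesgue U g
            \<and> set_integrable lebesgue U (\<lambda>x. (norm (g x))\<^sup>2) \<and> is_weak_grad U u g)"

definition H1r :: "(real^'n \<Rightarrow> real) \<Rightarrow> bool" where
  "H1r u \<longleftrightarrow> H1 (ball 0 1) u
     \<and> (\<exists>w. AE x in lebesgue. x \<in> ball 0 1 \<longrightarrow> u x = w (norm x))"

definition Qf :: "(real \<Rightarrow> real) \<Rightarrow> (real^'n \<Rightarrow> real) \<Rightarrow> real" where
  "Qf V u = set_lebesgue_integral lebesgue (ball 0 1)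
      (\<lambda>x. (norm (wgrad (ball 0 1) u x))\<^sup>2 + V (norm x) * (u x)\<^sup>2)"

definition Kp :: "real \<Rightarrow> real \<Rightarrow> real \<Rightarrow> real \<Rightarrow> (real^'n \<Rightarrow> real) set" where
  "Kp R1 R2 c p = {u. H1r u
     \<and> set_integrable lebesgue (ball 0 1) (\<lambda>x. \<bar>u x\<bar> powr (p + 1))
     \<and> (set_lebesgue_integral lebesgue (ball 0 1) (\<lambda>x. \<bar>u x\<bar> powr (p + 1))
          / measure lebesgue (ball (0::real^'n) 1)) powr (1 / (p + 1)) = 1
     \<and> (AE x in lebesgue. x \<in> ball 0 R1 \<union> (ball 0 1 - ball 0 R2) \<longrightarrow> \<bar>u x\<bar> \<le> c)}"

definition neumann_green :: "nat \<Rightarrow> (real \<Rightarrow> real) \<Rightarrow> (real \<Rightarrow> real \<Rightarrow> real) \<Rightarrow> bool" where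
  "neumann_green n V G \<longleftrightarrow> (\<forall>s\<in>{0<..<1}.
      continuous_on {0<..<1} (\<lambda>r. G r s)
    \<and> (\<forall>a b. 0 < a \<longrightarrow> b < 1 \<longrightarrow> set_integrable lborel {a..b} (\<lambda>r. G r s))
    \<and> (\<forall>\<phi>. test_fun {0<..<1} \<phi> \<longrightarrow>
          set_lebesgue_integral lborel {0<..<1}
            (\<lambda>r. G r s * (- deriv (deriv \<phi>) r + deriv (\<lambda>t. (real n - 1) / t * \<phi> t) r
                          + V r * \<phi> r)) = \<phi> s)
    \<and> ((\<lambda>r. deriv (\<lambda>t. G t s) r) \<longlongrightarrow> 0) (at_right 0)
    \<and> ((\<lambda>r. deriv (\<lambda>t. G t s) r) \<longlongrightarrow> 0) (at_left 1))"

end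

theory Submission
  imports Defs "HOL-Real_Asymp.Real_Asymp"
begin

text \<open>Hence \<open>|B\<^sub>1|(1 - c\<^sup>p\<^sup>+\<^sup>1) \<le> \<integral>\<^sub>A u\<^sub>p\<^sup>p\<^sup>+\<^sup>1 \<le> |B\<^sub>1|\<close>, and the
  \<open>(p+1)\<close>-th roots of both bounds divided by \<open>|A|\<close> tend to 1.\<close>

lemma measure_annulus:
  fixes c :: "'a::euclidean_space"
  assumes "0 \<le> r" "r \<le> s"
  shows "measure lebesgue (ball c s - ball c r)
           = (s ^ DIM('a) - r ^ DIM('a)) * measure lebesgue (ball (0::'a) 1)"
proof -
  have "emeasure lebesgue (ball c s) \<noteq> \<infinity>"
    using lmeasurable_ball[of c s] by (auto simp: fmeasurable_def)
  then have "measure lebesgue (ball c s - ball c r)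
               = measure lebesgue (ball c s) - measure lebesgue (ball c r)"
    by (rule measure_Diff) (use assms in auto)
  then show ?thesis
    using content_ball_conv_unit_ball[of r c] content_ball_conv_unit_ball[of s c] assms
    by (simp add: algebra_simps)
qed

lemma measure_annulus_pos:
  fixes c :: "'a::euclidean_space"
  assumes "0 \<le> r" "r < s"
  shows "0 < measure lebesgue (ball c s - ball c r)"
proof -
  have "r ^ DIM('a) < s ^ DIM('a)"
    using assms by (intro power_strict_mono) auto
  then show ?thesis
    using measure_annulus[of r s c] assms content_ball_pos[of 1 "0::'a"] by simp
qed

lemma powr_eq_1_imp_eq_1:
  fixes x e :: real
  assumes "0 \<le> x" "e \<noteq> 0" "x powr e = 1"
  shows "x = 1"
  using assms by (cases "x = 0") (auto simp: powr_def)

lemma set_integral_Un_bounds: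
  fixes f :: "'a \<Rightarrow> real"
  assumes int: "set_integrable M (A \<union> B) f"
    and sets: "A \<in> sets M" "B \<in> sets M" and disj: "A \<inter> B = {}"
    and fin: "emeasure M B \<noteq> \<infinity>"
    and bound: "AE x\<in>B in M. 0 \<le> f x \<and> f x \<le> k"
  shows "set_lebesgue_integral M (A \<union> B) f - k * measure M B \<le> set_lebesgue_integral M A f"
    and "set_lebesgue_integral M A f \<le> set_lebesgue_integral M (A \<union> B) f"
proof -
  have intA: "set_integrable M A f" and intB: "set_integrable M B f"
    by (rule set_integrable_subset[OF int]; use sets in auto)+
  have split: "set_lebesgue_integral M (A \<union> B) f
                 = set_lebesgue_integral M A f + set_lebesgue_integral M B f"
    by (rule set_integral_Un[OF disj intA intB])
  have "set_integrable M B (\<lambda>_. k)"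
    using sets fin by (simp add: set_integrable_def less_top)
  then have "set_lebesgue_integral M B f \<le> set_lebesgue_integral M B (\<lambda>_. k)"
    using intB bound by (intro set_integral_mono_AE) (auto elim!: AE_mp)
  also have "\<dots> = k * measure M B"
    using sets fin by (simp add: set_integral_const)
  finally show "set_lebesgue_integral M (A \<union> B) f - k * measure M B \<le> set_lebesgue_integral M A f"
    using split by simp
  have "0 \<le> set_lebesgue_integral M B f"
    using bound unfolding set_lebesgue_integral_def
    by (intro integral_nonneg_AE) (auto simp: indicator_def elim!: AE_mp)
  then show "set_lebesgue_integral M A f \<le> set_lebesgue_integral M (A \<union> B) f"
    using split by simp
qed

lemma tendsto_root_sandwich:
  fixes x :: "real \<Rightarrow> real" and a b c :: real
  assumes "0 < a" "0 < b" "0 \<le> c" "c < 1"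
    and bounds: "\<forall>\<^sub>F p in at_top. a * (1 - c powr (p + 1)) \<le> x p \<and> x p \<le> b"
  shows "((\<lambda>p. x p powr (1 / (p + 1))) \<longlongrightarrow> 1) at_top"
proof (rule tendsto_sandwich)
  have exp: "((\<lambda>p::real. 1 / (p + 1)) \<longlongrightarrow> 0) at_top" by real_asymp
  have "((\<lambda>p::real. c powr (p + 1)) \<longlongrightarrow> 0) at_top"
    using assms(3,4) by (cases "c = 0") (simp, real_asymp)
  then have "((\<lambda>p. a * (1 - c powr (p + 1))) \<longlongrightarrow> a * (1 - 0)) at_top"
    by (intro tendsto_intros)
  then have "((\<lambda>p. (a * (1 - c powr (p + 1))) powr (1 / (p + 1))) \<longlongrightarrow> a powr 0) at_top"
    using assms(1) by (intro tendsto_powr[OF _ exp]) auto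
  then show "((\<lambda>p. (a * (1 - c powr (p + 1))) powr (1 / (p + 1))) \<longlongrightarrow> 1) at_top"
    using assms(1) by simp
  have "((\<lambda>p. b powr (1 / (p + 1))) \<longlongrightarrow> b powr 0) at_top"
    using assms(2) by (intro tendsto_powr[OF _ exp]) auto
  then show "((\<lambda>p. b powr (1 / (p + 1))) \<longlongrightarrow> 1) at_top"
    using assms(2) by simp
  have "\<forall>\<^sub>F p in at_top. 0 \<le> a * (1 - c powr (p + 1)) \<and> a * (1 - c powr (p + 1)) \<le> x p \<and> x p \<le> b
          \<and> 0 < p + 1"
    using eventually_conj[OF bounds eventually_gt_at_top[of 0]]
    by (rule eventually_mono) (use assms(1,3,4) in \<open>auto intro!: mult_nonneg_nonneg powr_le1\<close>)
  then show "\<forall>\<^sub>F p in at_top. (a * (1 - c powr (p + 1))) powr (1 / (p + 1)) \<le> x p powr (1 / (p + 1))"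
    and "\<forall>\<^sub>F p in at_top. x p powr (1 / (p + 1)) \<le> b powr (1 / (p + 1))"
    by (rule eventually_mono; use assms(1) in \<open>auto intro!: powr_mono2\<close>)+
qed

lemma Kp_annulus_integral_bounds:
  fixes w :: "real^'n \<Rightarrow> real"
  assumes w: "w \<in> Kp R1 R2 c p" and "-1 < p" "0 \<le> R1" "R1 \<le> R2" "R2 \<le> 1"
    and k: "c \<le> k" "0 \<le> k"
  defines "m1 \<equiv> measure lebesgue (ball (0::real^'n) 1)"
  shows "m1 * (1 - k powr (p + 1)) \<le> (LINT x:ball 0 R2 - ball 0 R1|lebesgue. \<bar>w x\<bar> powr (p + 1))"
    and "(LINT x:ball 0 R2 - ball 0 R1|lebesgue. \<bar>w x\<bar> powr (p + 1)) \<le> m1"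
proof -
  define A where "A = ball (0::real^'n) R2 - ball 0 R1"
  define Out where "Out = ball (0::real^'n) R1 \<union> (ball 0 1 - ball 0 R2)"
  define f where "f = (\<lambda>x. \<bar>w x\<bar> powr (p + 1))"
  have ball_split: "A \<union> Out = ball 0 1" "A \<inter> Out = {}" and "Out \<subseteq> ball 0 1"
    using assms by (auto simp: A_def Out_def)
  then have Out_fin: "emeasure lebesgue Out \<noteq> \<infinity>" and Out_le: "measure lebesgue Out \<le> m1"
    using lmeasurable_ball[of "0::real^'n" 1] emeasure_mono[of Out "ball 0 1" lebesgue]
    by (auto simp: Out_def m1_def fmeasurable_def top.extremum_unique intro!: measure_mono_fmeasurable)
  have int: "set_integrable lebesgue (A \<union> Out) f"
    and norm: "((LINT x:A \<union> Out|lebesgue. f x) / m1) powr (1 / (p + 1)) = 1"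
    and small: "AE x in lebesgue. x \<in> Out \<longrightarrow> \<bar>w x\<bar> \<le> c"
    using w unfolding ball_split(1) by (auto simp: Kp_def f_def m1_def Out_def)
  have "0 \<le> (LINT x:A \<union> Out|lebesgue. f x)"
    unfolding set_lebesgue_integral_def by (auto simp: f_def indicator_def intro: integral_nonneg_AE)
  then have total: "(LINT x:A \<union> Out|lebesgue. f x) = m1"
    using powr_eq_1_imp_eq_1[OF _ _ norm] \<open>-1 < p\<close> content_ball_pos[of 1 "0::real^'n"]
    by (simp add: m1_def)
  have "AE x\<in>Out in lebesgue. 0 \<le> f x \<and> f x \<le> k powr (p + 1)"
    using small by (rule AE_mp) (use assms in \<open>auto simp: f_def intro!: AE_I2 powr_mono2\<close>)
  note split = set_integral_Un_bounds[OF int _ _ ball_split(2) Out_fin this]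
  have "m1 * (1 - k powr (p + 1)) \<le> m1 - k powr (p + 1) * measure lebesgue Out"
    using Out_le by (simp add: algebra_simps mult_right_mono)
  then show "m1 * (1 - k powr (p + 1)) \<le> (LINT x:ball 0 R2 - ball 0 R1|lebesgue. \<bar>w x\<bar> powr (p + 1))"
    and "(LINT x:ball 0 R2 - ball 0 R1|lebesgue. \<bar>w x\<bar> powr (p + 1)) \<le> m1"
    using split total by (simp_all add: A_def Out_def f_def)
qed

theorem lemma3p3:
  fixes V :: "real \<Rightarrow> real" and G :: "real \<Rightarrow> real \<Rightarrow> real" and F :: "real \<Rightarrow> real"
    and rbar R1 R2 c :: real and u :: "real \<Rightarrow> real^'n \<Rightarrow> real"
  assumes n2: "CARD('n) \<ge> 2"
    and V_smooth: "smooth_on (ball 0 1) (\<lambda>x::real^'n. V (norm x))"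
    and V_nonneg: "\<forall>r\<in>{0..<1}. V r \<ge> 0"
    and V_nonzero: "\<exists>r\<in>{0..<1}. V r \<noteq> 0"
    and green: "neumann_green CARD('n) V G"
    and F_def: "\<forall>r. F r = real CARD('n) * measure lebesgue (ball (0::real^'n) 1)
                           * r ^ (CARD('n) - 1) / G r r"
    and rbar: "0 < rbar" "rbar < 1"
    and rbar_locmin: "\<exists>e>0. \<forall>r. 0 < r \<and> r < 1 \<and> \<bar>r - rbar\<bar> < e \<longrightarrow> F rbar \<le> F r"
    and R: "0 < R1" "R1 < rbar" "rbar < R2" "R2 < 1"
    and rbar_min: "\<forall>r\<in>{R1..R2}. F rbar \<le> F r"
    and c: "max (G R1 rbar / G rbar rbar) (G R2 rbar / G rbar rbar) < c" "c < 1"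
    and u: "\<forall>p>1. u p \<in> Kp R1 R2 c p
                 \<and> (AE x in lebesgue. x \<in> ball 0 1 \<longrightarrow> u p x \<ge> 0)
                 \<and> Qf V (u p) = Inf (Qf V ` Kp R1 R2 c p)"
  shows "((\<lambda>p. (set_lebesgue_integral lebesgue (ball 0 R2 - ball 0 R1) (\<lambda>x. \<bar>u p x\<bar> powr (p + 1))
               / measure lebesgue (ball (0::real^'n) R2 - ball 0 R1)) powr (1 / (p + 1)))
          \<longlongrightarrow> 1) at_top"
proof -
  define A where "A = ball (0::real^'n) R2 - ball 0 R1"
  define mA where "mA = measure lebesgue A"
  define m1 where "m1 = measure lebesgue (ball (0::real^'n) 1)"
  define k where "k = max c 0"
  have mA: "0 < mA"
    unfolding mA_def A_def using R by (intro measure_annulus_pos) auto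
  have bounds: "m1 * (1 - k powr (p + 1)) \<le> (LINT x:A|lebesgue. \<bar>u p x\<bar> powr (p + 1))
        \<and> (LINT x:A|lebesgue. \<bar>u p x\<bar> powr (p + 1)) \<le> m1" if "p > 1" for p
    using Kp_annulus_integral_bounds[of "u p" R1 R2 c p k] u that R
    by (auto simp: A_def m1_def k_def)
  have A_bounds: "\<forall>\<^sub>F p in at_top.
      m1 / mA * (1 - k powr (p + 1)) \<le> (LINT x:A|lebesgue. \<bar>u p x\<bar> powr (p + 1)) / mA
      \<and> (LINT x:A|lebesgue. \<bar>u p x\<bar> powr (p + 1)) / mA \<le> m1 / mA"
    using eventually_gt_at_top[of 1]
    by (rule eventually_mono) (use bounds mA in \<open>auto intro: divide_right_mono\<close>)
  have "((\<lambda>p. ((LINT x:A|lebesgue. \<bar>u p x\<bar> powr (p + 1)) / mA) powr (1 / (p + 1))) \<longlongrightarrow> 1) at_top"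
    by (rule tendsto_root_sandwich[OF _ _ _ _ A_bounds])
       (use c mA content_ball_pos[of 1 "0::real^'n"] in \<open>auto simp: k_def m1_def\<close>)
  then show ?thesis by (simp add: A_def mA_def)
qed

end
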